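(* Let $m\ge 2$ and consider the memristive Hopfield neural network $$\frac{du_i}{dt}=-a_iu_i+\sum_{j=1}^m w_{ij}f_j(u_j)+k\,\varphi_i(\rho)\,u_i+J_i-P\,u_i\sum_{j=1}^m\Gamma(u_j),\quad 1\le i\le m,\qquad \frac{d\rho}{dt}=\sum_{i=1}^m\gamma_iu_i-b\rho,$$ where $\Gamma(s)=\dfrac{1}{1+\exp[-r(s-V)]}$ with $r>0$, $V\in\mathbb{R}$, $P>0$; $a_i,b,\beta,\eta_i,k>0$; $w_{ij},J_i,\gamma_i\in\mathbb{R}$; $f_i,\varphi_i$ locally Lipschitz with $a_i>k$, $|f_i(s)|\le\beta$, $\varphi_i(s)=1-\eta_is^2$ for all $s\in\mathbb{R}$, $1\le i\le m$. Define $a=\min_ia_i$, $W=\max_{i,j}|w_{ij}|$, $J=\max_i|J_i|$, $\gamma^2=\max_i\gamma_i^2$, $$C_1=\frac{1}{a-k}\Big(\frac{m\gamma^2}{b}+b\Big),\ C_2=\Big(\frac{m\gamma^2}{b}+b\Big)\frac{m(mW\beta+J)^2}{(a-k)^2},\ \mu_0=b\min\Big\{\frac1{C_1},1\Big\},\ Q=1+\frac{C_2}{\mu_0\min\{C_1,1\}},$$ and $a^*=\max_{i,j}|a_i-a_j|$, $W^*=\max_{i,j,\ell}|w_{i\ell}-w_{j\ell}|$, $\eta^*=\max_{i,j}|\eta_i-\eta_j|$, $J^*=\max_{i,j}|J_i-J_j|$. For $\varepsilon>0$ let $$P^*(\varepsilon)=\frac{1}{m\varepsilon}\big(mW^*\beta+a^*Q^{1/2}+k\eta^*Q^{3/2}+J^*\big)\big[1+\exp\{r(\sqrt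 Q+|V|)\}\big].$$ Then for every $\varepsilon>0$, if $P>P^*(\varepsilon)$, the network is approximately synchronized: $$\sup_{g^0\in\mathbb{R}^{m+1}}\ \max_{1\le i<j\le m}\ \limsup_{t\to\infty}|u_i(t)-u_j(t)|<\varepsilon,$$ where $(u_1,\dots,u_m,\rho)$ is the solution with initial state $g^0$, and this convergence occurs at the uniform exponential rate $$\mu(P)=(a-k)+\frac{mP}{1+\exp\{r(\sqrt Q+|V|)\}}>0,$$ in the sense that there is a constant $D<\varepsilon$ (independent of the initial state) such that for every initial state there is $T\ge0$ with $|u_i(t)-u_j(t)|^2\le e^{-\mu(P)(t-T)}|u_i(T)-u_j(T)|^2+D^2$ for all $t>T$ and all $i\ne j$.
   Context: The paper calls a network approximately synchronizable if for every prescribed gap $\varepsilon>0$ there is a threshold on the coupling parameter beyond which the synchronous degree $\sup_{g^0}\max_{i<j}\limsup_{t\to\infty}|u_i(t)-u_j(t)|$ is less than $\varepsilon$; if the limsup convergence admits a uniform exponential rate, it is called approximate exponential synchronization. Solutions exist globally in time for every initial state. *)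

theory Defs
  imports "HOL-Analysis.Analysis"
begin

(* Indices 1..m of the paper are rendered as 0..<m. *)

definition Gam :: "real \<Rightarrow> real \<Rightarrow> real \<Rightarrow> real" where
  "Gam r V s = 1 / (1 + exp (- r * (s - V)))"

definition amin :: "nat \<Rightarrow> (nat \<Rightarrow> real) \<Rightarrow> real" where
  "amin m a = Min (a ` {..<m})"
definition Wmax :: "nat \<Rightarrow> (nat \<Rightarrow> nat \<Rightarrow> real) \<Rightarrow> real" where
  "Wmax m w = Max ((\<lambda>(i,j). \<bar>w i j\<bar>) ` ({..<m} \<times> {..<m}))"
definition Jmax :: "nat \<Rightarrow> (nat \<Rightarrow> real) \<Rightarrow> real" where
  "Jmax m J = Max ((\<lambda>i. \<bar>J i\<bar>) ` {..<m})"
definition gam2 :: "nat \<Rightarrow> (nat \<Rightarrow> real) \<Rightarrow> real" where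
  "gam2 m \<gamma> = Max ((\<lambda>i. (\<gamma> i)\<^sup>2) ` {..<m})"
definition dstar :: "nat \<Rightarrow> (nat \<Rightarrow> real) \<Rightarrow> real" where
  "dstar m x = Max ((\<lambda>(i,j). \<bar>x i - x j\<bar>) ` ({..<m} \<times> {..<m}))"
definition Wstar :: "nat \<Rightarrow> (nat \<Rightarrow> nat \<Rightarrow> real) \<Rightarrow> real" where
  "Wstar m w = Max ((\<lambda>(i,j,l). \<bar>w i l - w j l\<bar>) ` ({..<m} \<times> {..<m} \<times> {..<m}))"

definition C1 :: "nat \<Rightarrow> (nat \<Rightarrow> real) \<Rightarrow> real \<Rightarrow> real \<Rightarrow> (nat \<Rightarrow> real) \<Rightarrow> real" where
  "C1 m a k b \<gamma> = (1 / (amin m a - k)) * (real m * gam2 m \<gamma> / b + b)"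

definition C2 :: "nat \<Rightarrow> (nat \<Rightarrow> real) \<Rightarrow> real \<Rightarrow> real \<Rightarrow> (nat \<Rightarrow> real)
    \<Rightarrow> (nat \<Rightarrow> nat \<Rightarrow> real) \<Rightarrow> real \<Rightarrow> (nat \<Rightarrow> real) \<Rightarrow> real" where
  "C2 m a k b \<gamma> w \<beta> J = (real m * gam2 m \<gamma> / b + b) *
      (real m * (real m * Wmax m w * \<beta> + Jmax m J)\<^sup>2 / (amin m a - k)\<^sup>2)"

definition mu0 :: "nat \<Rightarrow> (nat \<Rightarrow> real) \<Rightarrow> real \<Rightarrow> real \<Rightarrow> (nat \<Rightarrow> real) \<Rightarrow> real" where
  "mu0 m a k b \<gamma> = b * min (1 / C1 m a k b \<gamma>) 1"

definition Qc :: "nat \<Rightarrow> (nat \<Rightarrow> real) \<Rightarrow> real \<Rightarrow> real \<Rightarrow> (nat \<Rightarrow> real)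
    \<Rightarrow> (nat \<Rightarrow> nat \<Rightarrow> real) \<Rightarrow> real \<Rightarrow> (nat \<Rightarrow> real) \<Rightarrow> real" where
  "Qc m a k b \<gamma> w \<beta> J = 1 + C2 m a k b \<gamma> w \<beta> J / (mu0 m a k b \<gamma> * min (C1 m a k b \<gamma>) 1)"

definition Pstar :: "nat \<Rightarrow> (nat \<Rightarrow> real) \<Rightarrow> real \<Rightarrow> real \<Rightarrow> (nat \<Rightarrow> real)
    \<Rightarrow> (nat \<Rightarrow> nat \<Rightarrow> real) \<Rightarrow> real \<Rightarrow> (nat \<Rightarrow> real) \<Rightarrow> (nat \<Rightarrow> real)
    \<Rightarrow> real \<Rightarrow> real \<Rightarrow> real \<Rightarrow> real" where
  "Pstar m a k b \<gamma> w \<beta> J \<eta> r V \<epsilon> =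
     (let Q = Qc m a k b \<gamma> w \<beta> J in
      (1 / (real m * \<epsilon>)) *
      (real m * Wstar m w * \<beta> + dstar m a * sqrt Q + k * dstar m \<eta> * Q powr (3/2) + dstar m J) *
      (1 + exp (r * (sqrt Q + \<bar>V\<bar>))))"

definition muP :: "nat \<Rightarrow> (nat \<Rightarrow> real) \<Rightarrow> real \<Rightarrow> real \<Rightarrow> (nat \<Rightarrow> real)
    \<Rightarrow> (nat \<Rightarrow> nat \<Rightarrow> real) \<Rightarrow> real \<Rightarrow> (nat \<Rightarrow> real) \<Rightarrow> real \<Rightarrow> real \<Rightarrow> real \<Rightarrow> real" where
  "muP m a k b \<gamma> w \<beta> J r V P =
     (amin m a - k) + real m * P / (1 + exp (r * (sqrt (Qc m a k b \<gamma> w \<beta> J) + \<bar>V\<bar>)))"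

definition is_solution ::
  "nat \<Rightarrow> (nat \<Rightarrow> real) \<Rightarrow> (nat \<Rightarrow> nat \<Rightarrow> real) \<Rightarrow> (nat \<Rightarrow> real \<Rightarrow> real) \<Rightarrow> real
   \<Rightarrow> (nat \<Rightarrow> real \<Rightarrow> real) \<Rightarrow> (nat \<Rightarrow> real) \<Rightarrow> real \<Rightarrow> real \<Rightarrow> real
   \<Rightarrow> (nat \<Rightarrow> real) \<Rightarrow> real
   \<Rightarrow> (nat \<Rightarrow> real \<Rightarrow> real) \<Rightarrow> (real \<Rightarrow> real) \<Rightarrow> bool" where
  "is_solution m a w f k \<phi> J P r V \<gamma> b u \<rho> \<longleftrightarrow>
     (\<forall>t\<ge>0.
        (\<forall>i<m. (u i has_real_derivative
            (- a i * u i t + (\<Sum>j<m. w i j * f j (u j t)) + k * \<phi> i (\<rho> t) * u i t + J i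
             - P * u i t * (\<Sum>j<m. Gam r V (u j t)))) (at t within {0..}))
      \<and> (\<rho> has_real_derivative ((\<Sum>i<m. \<gamma> i * u i t) - b * \<rho> t)) (at t within {0..}))"

end

theory Submission
  imports Defs
begin

(* The energy S = \<Sum> u_i^2 obeys S' \<le> K - (a - k) S, because the memristive term
   -k \<eta>_i \<rho>^2 u_i^2 and the \<Gamma>-coupling only dissipate.  By the comparison principle for
   linear differential inequalities S, and then through \<rho>' = \<Sum> \<gamma>_i u_i - b \<rho> also \<rho>^2,
   eventually stay below Q.  Inside this absorbing set every \<Gamma>(u_l) is at least
   1 / (1 + exp (r (sqrt Q + |V|))), so the coupling damps e = u_i - u_j at rate at least
   \<mu>(P), while the mismatch between the parameters of neurons i and j forces e by at most
   the numerator G of P*(\<epsilon>).  The same comparison principle for e^2 gives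
   e(t)^2 \<le> exp (-\<mu>(P) (t - T)) e(T)^2 + (G / \<mu>(P))^2, and P > P*(\<epsilon>) implies G / \<mu>(P) < \<epsilon>. *)

lemma linear_differential_inequality:
  fixes y y' :: "real \<Rightarrow> real" and c K T0 t :: real
  assumes c: "0 < c"
    and deriv: "\<forall>s\<ge>T0. (y has_real_derivative y' s) (at s)"
    and ineq: "\<forall>s\<ge>T0. y' s \<le> K - c * y s"
    and t: "T0 \<le> t"
  shows "y t \<le> exp (- c * (t - T0)) * (y T0 - K / c) + K / c"
proof -
  let ?z = "\<lambda>s. exp (c * s) * (y s - K / c)"
  have "?z t \<le> ?z T0"
  proof (rule DERIV_nonpos_imp_nonincreasing[OF t])
    fix s assume s: "T0 \<le> s" "s \<le> t"
    have "(?z has_real_derivative exp (c * s) * (y' s - (K - c * y s))) (at s)"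
      using deriv s c by (auto intro!: derivative_eq_intros simp: field_simps)
    moreover have "exp (c * s) * (y' s - (K - c * y s)) \<le> 0"
      using ineq s by (intro mult_nonneg_nonpos) auto
    ultimately show "\<exists>z. (?z has_real_derivative z) (at s) \<and> z \<le> 0" by blast
  qed
  then have "exp (- c * t) * ?z t \<le> exp (- c * t) * ?z T0" by simp
  moreover have "exp (- c * t) * ?z t = y t - K / c" by (simp add: exp_add[symmetric])
  moreover have "exp (- c * t) * ?z T0 = exp (- c * (t - T0)) * (y T0 - K / c)"
    by (simp add: exp_add[symmetric] algebra_simps)
  ultimately show ?thesis by linarith
qed

lemma linear_differential_inequality_nonneg:
  fixes y y' :: "real \<Rightarrow> real" and c K T0 t :: real
  assumes c: "0 < c"
    and deriv: "\<forall>s\<ge>T0. (y has_real_derivative y' s) (at s)"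
    and ineq: "\<forall>s\<ge>T0. y' s \<le> K - c * y s"
    and K: "0 \<le> K" and t: "T0 \<le> t"
  shows "y t \<le> exp (- c * (t - T0)) * y T0 + K / c"
proof -
  have "exp (- c * (t - T0)) * (y T0 - K / c)
      = exp (- c * (t - T0)) * y T0 - exp (- c * (t - T0)) * (K / c)"
    by (rule right_diff_distrib)
  moreover have "0 \<le> exp (- c * (t - T0)) * (K / c)" using c K by simp
  ultimately show ?thesis using linear_differential_inequality[OF c deriv ineq t] by linarith
qed

lemma tendsto_exp_decay:
  fixes c T0 :: real
  assumes "0 < c"
  shows "((\<lambda>t. exp (- c * (t - T0))) \<longlongrightarrow> 0) at_top"
proof -
  have "filterlim (\<lambda>t. - T0 + t) at_top at_top"
    by (rule filterlim_tendsto_add_at_top[OF tendsto_const filterlim_ident])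
  then have "filterlim (\<lambda>t. - c * (t - T0)) at_bot at_top"
    using assms by (intro filterlim_tendsto_neg_mult_at_bot[OF tendsto_const]) auto
  then show ?thesis by (rule filterlim_compose[OF exp_at_bot])
qed

lemma eventually_le_of_linear_differential_inequality:
  fixes y y' :: "real \<Rightarrow> real" and c K \<delta> :: real
  assumes c: "0 < c" and \<delta>: "0 < \<delta>"
    and ineq: "\<forall>\<^sub>F s in at_top. (y has_real_derivative y' s) (at s) \<and> y' s \<le> K - c * y s"
  shows "\<forall>\<^sub>F t in at_top. y t \<le> K / c + \<delta>"
proof -
  obtain T0 where T0: "\<forall>s\<ge>T0. (y has_real_derivative y' s) (at s) \<and> y' s \<le> K - c * y s"
    using ineq by (auto simp: eventually_at_top_linorder)
  have "((\<lambda>t. exp (- c * (t - T0)) * (y T0 - K / c)) \<longlongrightarrow> 0 * (y T0 - K / c)) at_top"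
    by (intro tendsto_mult_right tendsto_exp_decay c)
  then have "\<forall>\<^sub>F t in at_top. exp (- c * (t - T0)) * (y T0 - K / c) < \<delta>"
    using \<delta> by (auto dest: order_tendstoD(2))
  moreover have "\<forall>\<^sub>F t in at_top. y t \<le> exp (- c * (t - T0)) * (y T0 - K / c) + K / c"
    using eventually_ge_at_top[of T0]
    by eventually_elim (use linear_differential_inequality[OF c] T0 in blast)
  ultimately show ?thesis by eventually_elim simp
qed

lemma Limsup_abs_le_of_exp_bound:
  fixes x :: "real \<Rightarrow> real" and \<mu> D T c :: real
  assumes \<mu>: "0 < \<mu>" and D: "0 \<le> D"
    and bound: "\<forall>t\<ge>T. (x t)\<^sup>2 \<le> exp (- \<mu> * (t - T)) * c + D\<^sup>2"
  shows "Limsup at_top (\<lambda>t. ereal \<bar>x t\<bar>) \<le> ereal D"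
proof -
  let ?g = "\<lambda>t. sqrt (exp (- \<mu> * (t - T)) * c + D\<^sup>2)"
  have "\<forall>t\<ge>T. \<bar>x t\<bar> \<le> ?g t"
    using bound by (intro allI impI real_le_rsqrt) simp
  then have "\<forall>\<^sub>F t in at_top. ereal \<bar>x t\<bar> \<le> ereal (?g t)"
    by (auto simp: eventually_at_top_linorder)
  then have "Limsup at_top (\<lambda>t. ereal \<bar>x t\<bar>) \<le> Limsup at_top (\<lambda>t. ereal (?g t))"
    by (rule Limsup_mono)
  also have "\<dots> = ereal (sqrt (0 * c + D\<^sup>2))"
    by (intro lim_imp_Limsup trivial_limit_at_top_linorder)
      (auto simp only: lim_ereal intro!: tendsto_intros tendsto_exp_decay \<mu>)
  finally show ?thesis using D by simp
qed

lemma two_mult_abs_le_young: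
  fixes x B c :: real
  assumes "0 < c"
  shows "2 * \<bar>x\<bar> * B \<le> c * x\<^sup>2 + B\<^sup>2 / c"
proof -
  have "0 \<le> (c * \<bar>x\<bar> - B)\<^sup>2" by simp
  then have "c * (2 * \<bar>x\<bar> * B) \<le> c * (c * x\<^sup>2 + B\<^sup>2 / c)"
    using assms by (simp add: power2_eq_square algebra_simps)
  then show ?thesis using assms by simp
qed

lemma dissipation_bound:
  fixes x F G d \<mu> :: real
  assumes \<mu>: "0 < \<mu>" and d: "\<mu> \<le> d" and F: "\<bar>F\<bar> \<le> G"
  shows "2 * x * (F - d * x) \<le> G\<^sup>2 / \<mu> - \<mu> * x\<^sup>2"
proof -
  have "x * F \<le> \<bar>x\<bar> * \<bar>F\<bar>" using abs_ge_self[of "x * F"] by (simp add: abs_mult)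
  also have "\<dots> \<le> \<bar>x\<bar> * G" using F by (simp add: mult_left_mono)
  finally have "x * F \<le> \<bar>x\<bar> * G" .
  moreover have "\<mu> * x\<^sup>2 \<le> d * x\<^sup>2" using d by (simp add: mult_right_mono)
  moreover have "2 * \<bar>x\<bar> * G \<le> \<mu> * x\<^sup>2 + G\<^sup>2 / \<mu>" using two_mult_abs_le_young[OF \<mu>] .
  moreover have "2 * x * (F - d * x) = 2 * (x * F) - 2 * (d * x\<^sup>2)"
    by (simp add: power2_eq_square algebra_simps)
  ultimately show ?thesis by linarith
qed

lemma abs_sum_mult_le:
  fixes c g :: "nat \<Rightarrow> real"
  assumes "\<forall>j<m. \<bar>c j\<bar> \<le> W" and "\<forall>j<m. \<bar>g j\<bar> \<le> \<beta>"
  shows "\<bar>\<Sum>j<m. c j * g j\<bar> \<le> real m * W * \<beta>"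
proof -
  have "\<bar>\<Sum>j<m. c j * g j\<bar> \<le> (\<Sum>j<m. \<bar>c j * g j\<bar>)" by (rule sum_abs)
  also have "\<dots> = (\<Sum>j<m. \<bar>c j\<bar> * \<bar>g j\<bar>)" by (simp add: abs_mult)
  also have "\<dots> \<le> (\<Sum>j<m. W * \<beta>)"
    using assms by (intro sum_mono mult_mono) auto
  finally show ?thesis by simp
qed

lemma amin_le: "i < m \<Longrightarrow> amin m a \<le> a i"
  unfolding amin_def by (intro Min_le) auto

lemma amin_gt: "0 < m \<Longrightarrow> \<forall>i<m. k < a i \<Longrightarrow> k < amin m a"
  unfolding amin_def by (subst Min_gr_iff) auto

lemma abs_le_Wmax: "i < m \<Longrightarrow> j < m \<Longrightarrow> \<bar>w i j\<bar> \<le> Wmax m w"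
  unfolding Wmax_def by (intro Max_ge) auto

lemma abs_le_Jmax: "i < m \<Longrightarrow> \<bar>J i\<bar> \<le> Jmax m J"
  unfolding Jmax_def by (intro Max_ge) auto

lemma power2_le_gam2: "i < m \<Longrightarrow> (\<gamma> i)\<^sup>2 \<le> gam2 m \<gamma>"
  unfolding gam2_def by (intro Max_ge) auto

lemma gam2_nonneg: "0 < m \<Longrightarrow> 0 \<le> gam2 m \<gamma>"
  using power2_le_gam2[of 0 m \<gamma>] zero_le_power2[of "\<gamma> 0"] by linarith

lemma abs_diff_le_dstar: "i < m \<Longrightarrow> j < m \<Longrightarrow> \<bar>x i - x j\<bar> \<le> dstar m x"
  unfolding dstar_def by (intro Max_ge) auto

lemma dstar_nonneg: "0 < m \<Longrightarrow> 0 \<le> dstar m x"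
  using abs_diff_le_dstar[of 0 m 0 x] by simp

lemma abs_diff_le_Wstar: "i < m \<Longrightarrow> j < m \<Longrightarrow> l < m \<Longrightarrow> \<bar>w i l - w j l\<bar> \<le> Wstar m w"
  unfolding Wstar_def by (intro Max_ge) (auto intro!: image_eqI[where x="(i, j, l)"])

lemma Wstar_nonneg: "0 < m \<Longrightarrow> 0 \<le> Wstar m w"
  using abs_diff_le_Wstar[of 0 m 0 0 w] by simp

lemma Gam_pos: "0 < Gam r V s"
  unfolding Gam_def by (simp add: add_pos_pos)

lemma Gam_ge:
  assumes "0 < r" and "\<bar>s\<bar> \<le> R"
  shows "1 / (1 + exp (r * (R + \<bar>V\<bar>))) \<le> Gam r V s"
proof -
  have "- r * (s - V) \<le> r * (R + \<bar>V\<bar>)"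
    using assms mult_left_mono[of "V - s" "R + \<bar>V\<bar>" r] by (simp add: algebra_simps)
  then show ?thesis
    unfolding Gam_def by (intro divide_left_mono) (auto simp: add_pos_pos)
qed

lemma Qc_ge:
  assumes m: "0 < m" and b: "0 < b" and a_gt_k: "\<forall>i<m. k < a i"
  shows "1 + (real m * gam2 m \<gamma> / b\<^sup>2 + 1)
      * (real m * (real m * Wmax m w * \<beta> + Jmax m J)\<^sup>2 / (amin m a - k)\<^sup>2) \<le> Qc m a k b \<gamma> w \<beta> J"
proof -
  define R where "R = real m * (real m * Wmax m w * \<beta> + Jmax m J)\<^sup>2 / (amin m a - k)\<^sup>2"
  define g where "g = real m * gam2 m \<gamma> / b + b"
  define C where "C = C1 m a k b \<gamma>"
  define p where "p = min (1 / C) 1 * min C 1"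
  have g: "0 < g" using gam2_nonneg[OF m] b unfolding g_def by (simp add: add_nonneg_pos)
  have "0 < C"
    using g amin_gt[OF m a_gt_k] unfolding C_def C1_def g_def[symmetric] by simp
  then have p: "0 < p" "p \<le> 1" unfolding p_def by (auto simp: min_def)
  have "g * R / b \<le> g * R / (b * p)"
    using g b p by (intro divide_left_mono) (auto simp: R_def mult_le_cancel_left1)
  moreover have "Qc m a k b \<gamma> w \<beta> J = 1 + g * R / (b * p)"
    unfolding Qc_def C2_def mu0_def p_def C_def g_def R_def by (simp add: mult.assoc)
  moreover have "g * R / b = (real m * gam2 m \<gamma> / b\<^sup>2 + 1) * R"
    using b unfolding g_def by (simp add: field_simps power2_eq_square)
  ultimately show ?thesis unfolding R_def by linarith
qed

locale memristive_hopfield =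
  fixes m :: nat and a \<eta> J \<gamma> :: "nat \<Rightarrow> real" and w :: "nat \<Rightarrow> nat \<Rightarrow> real"
    and f \<phi> :: "nat \<Rightarrow> real \<Rightarrow> real" and k b \<beta> r V P :: real
  assumes m_pos: "0 < m" and k_pos: "0 < k" and b_pos: "0 < b" and r_pos: "0 < r"
    and P_pos: "0 < P" and a_gt_k: "\<forall>i<m. k < a i" and eta_nonneg: "\<forall>i<m. 0 \<le> \<eta> i"
    and f_bdd: "\<forall>i<m. \<forall>s. \<bar>f i s\<bar> \<le> \<beta>"
    and phi_eq: "\<forall>i<m. \<forall>s. \<phi> i s = 1 - \<eta> i * s\<^sup>2"
begin

abbreviation solution :: "(nat \<Rightarrow> real \<Rightarrow> real) \<Rightarrow> (real \<Rightarrow> real) \<Rightarrow> bool" where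
  "solution \<equiv> is_solution m a w f k \<phi> J P r V \<gamma> b"

abbreviation Q :: real where
  "Q \<equiv> Qc m a k b \<gamma> w \<beta> J"

abbreviation \<mu> :: real where
  "\<mu> \<equiv> muP m a k b \<gamma> w \<beta> J r V P"

definition drive :: "(nat \<Rightarrow> real) \<Rightarrow> nat \<Rightarrow> real" where
  "drive x i = (\<Sum>j<m. w i j * f j (x j)) + J i"

definition decay :: "(nat \<Rightarrow> real) \<Rightarrow> real \<Rightarrow> nat \<Rightarrow> real" where
  "decay x z i = a i - k + k * \<eta> i * z\<^sup>2 + P * (\<Sum>j<m. Gam r V (x j))"

(* The numerator of P*(\<epsilon>), with Q powr (3/2) written as Q * sqrt Q. *)
definition sync_defect :: real where
  "sync_defect = real m * Wstar m w * \<beta> + dstar m a * sqrt Q + k * dstar m \<eta> * Q * sqrt Q + dstar m J"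

lemma solution_has_derivative:
  assumes sol: "solution u \<rho>" and t: "0 < t"
  shows "i < m \<Longrightarrow>
      (u i has_real_derivative drive (\<lambda>j. u j t) i - decay (\<lambda>j. u j t) (\<rho> t) i * u i t) (at t)"
    and "(\<rho> has_real_derivative (\<Sum>i<m. \<gamma> i * u i t) - b * \<rho> t) (at t)"
proof -
  have "at t within {0..} = at t"
    using t by (intro at_within_interior) auto
  note sol_t = sol[unfolded is_solution_def, rule_format, OF less_imp_le[OF t], unfolded this]
  show "(\<rho> has_real_derivative (\<Sum>i<m. \<gamma> i * u i t) - b * \<rho> t) (at t)"
    using sol_t by (rule conjunct2)
  assume i: "i < m"
  have phi_i: "\<phi> i (\<rho> t) = 1 - \<eta> i * (\<rho> t)\<^sup>2" using phi_eq i by simp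
  have rate_eq: "- a i * u i t + (\<Sum>j<m. w i j * f j (u j t)) + k * \<phi> i (\<rho> t) * u i t + J i
      - P * u i t * (\<Sum>j<m. Gam r V (u j t))
      = drive (\<lambda>j. u j t) i - decay (\<lambda>j. u j t) (\<rho> t) i * u i t"
    unfolding drive_def decay_def phi_i by (simp add: algebra_simps)
  show "(u i has_real_derivative
      drive (\<lambda>j. u j t) i - decay (\<lambda>j. u j t) (\<rho> t) i * u i t) (at t)"
    using conjunct1[OF sol_t, rule_format, OF i] unfolding rate_eq .
qed

lemma abs_drive_le:
  assumes i: "i < m"
  shows "\<bar>drive x i\<bar> \<le> real m * Wmax m w * \<beta> + Jmax m J"
proof -
  have "\<bar>\<Sum>j<m. w i j * f j (x j)\<bar> \<le> real m * Wmax m w * \<beta>"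
    using abs_le_Wmax[OF i] f_bdd by (intro abs_sum_mult_le) auto
  then show ?thesis
    unfolding drive_def using abs_le_Jmax[OF i, of J] abs_triangle_ineq[of _ "J i"] by linarith
qed

lemma decay_ge:
  assumes i: "i < m"
  shows "amin m a - k \<le> decay x z i"
proof -
  have "0 \<le> k * \<eta> i * z\<^sup>2" using k_pos eta_nonneg i by simp
  moreover have "0 \<le> P * (\<Sum>j<m. Gam r V (x j))"
    using P_pos by (simp add: Gam_pos less_imp_le sum_nonneg)
  ultimately show ?thesis using amin_le[OF i, of a] unfolding decay_def by linarith
qed

lemma Q_ge_1: "1 \<le> Q"
proof -
  have "0 \<le> (real m * gam2 m \<gamma> / b\<^sup>2 + 1)
      * (real m * (real m * Wmax m w * \<beta> + Jmax m J)\<^sup>2 / (amin m a - k)\<^sup>2)"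
    using gam2_nonneg[OF m_pos] by simp
  then show ?thesis using Qc_ge[OF m_pos b_pos a_gt_k, of \<gamma> w \<beta> J] by linarith
qed

lemma muP_eq: "\<mu> = (amin m a - k) + P * (real m / (1 + exp (r * (sqrt Q + \<bar>V\<bar>))))"
  unfolding muP_def by simp

lemma muP_pos: "0 < \<mu>"
  using amin_gt[OF m_pos a_gt_k] m_pos P_pos unfolding muP_eq
  by (simp add: add_pos_pos)

lemma muP_le_decay:
  assumes i: "i < m" and x: "\<forall>j<m. \<bar>x j\<bar> \<le> sqrt Q"
  shows "\<mu> \<le> decay x z i"
proof -
  have "real m / (1 + exp (r * (sqrt Q + \<bar>V\<bar>))) \<le> (\<Sum>j<m. Gam r V (x j))"
    using sum_mono[of "{..<m}" "\<lambda>_. 1 / (1 + exp (r * (sqrt Q + \<bar>V\<bar>)))" "\<lambda>j. Gam r V (x j)"]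
      Gam_ge[OF r_pos] x by simp
  then have "P * (real m / (1 + exp (r * (sqrt Q + \<bar>V\<bar>)))) \<le> P * (\<Sum>j<m. Gam r V (x j))"
    by (rule mult_left_mono) (use P_pos in simp)
  moreover have "0 \<le> k * \<eta> i * z\<^sup>2" using k_pos eta_nonneg i by simp
  ultimately show ?thesis
    using amin_le[OF i, of a] unfolding muP_eq decay_def by linarith
qed

lemma abs_sync_forcing_le:
  assumes i: "i < m" and j: "j < m"
    and x: "\<forall>l<m. \<bar>x l\<bar> \<le> sqrt Q" and z: "z\<^sup>2 \<le> Q"
  shows "\<bar>drive x i - drive x j - (decay x z i - decay x z j) * x j\<bar> \<le> sync_defect"
proof -
  have "drive x i - drive x j - (decay x z i - decay x z j) * x j
      = (\<Sum>l<m. (w i l - w j l) * f l (x l)) + (a j - a i) * x j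
        + k * (\<eta> j - \<eta> i) * z\<^sup>2 * x j + (J i - J j)"
    unfolding drive_def decay_def by (simp add: sum_subtractf left_diff_distrib algebra_simps)
  moreover have "\<bar>\<Sum>l<m. (w i l - w j l) * f l (x l)\<bar> \<le> real m * Wstar m w * \<beta>"
    using i j f_bdd abs_diff_le_Wstar[of i m j _ w] by (intro abs_sum_mult_le) auto
  moreover have "\<bar>(a j - a i) * x j\<bar> \<le> dstar m a * sqrt Q"
    unfolding abs_mult using abs_diff_le_dstar[OF j i, of a] x j by (intro mult_mono) auto
  moreover have "\<bar>k * (\<eta> j - \<eta> i) * z\<^sup>2 * x j\<bar> \<le> k * dstar m \<eta> * Q * sqrt Q"
    unfolding abs_mult using abs_diff_le_dstar[OF j i, of \<eta>] x j z k_pos dstar_nonneg[OF m_pos] Q_ge_1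
    by (intro mult_mono) auto
  moreover have "\<bar>J i - J j\<bar> \<le> dstar m J" using abs_diff_le_dstar[OF i j] .
  ultimately show ?thesis unfolding sync_defect_def by linarith
qed

lemma eventually_sum_squares_le:
  assumes sol: "solution u \<rho>" and \<delta>: "0 < \<delta>"
  shows "\<forall>\<^sub>F t in at_top. (\<Sum>i<m. (u i t)\<^sup>2)
    \<le> real m * (real m * Wmax m w * \<beta> + Jmax m J)\<^sup>2 / (amin m a - k)\<^sup>2 + \<delta>"
proof -
  define B where "B = real m * Wmax m w * \<beta> + Jmax m J"
  define c where "c = amin m a - k"
  have c: "0 < c" using amin_gt[OF m_pos a_gt_k] unfolding c_def by simp
  let ?S' = "\<lambda>t. \<Sum>i<m. 2 * u i t * (drive (\<lambda>j. u j t) i - decay (\<lambda>j. u j t) (\<rho> t) i * u i t)"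
  have "\<forall>\<^sub>F t in at_top. ((\<lambda>t. \<Sum>i<m. (u i t)\<^sup>2) has_real_derivative ?S' t) (at t)
      \<and> ?S' t \<le> real m * B\<^sup>2 / c - c * (\<Sum>i<m. (u i t)\<^sup>2)"
    using eventually_gt_at_top[of 0]
  proof eventually_elim
    case (elim t)
    have "((\<lambda>t. \<Sum>i<m. (u i t)\<^sup>2) has_real_derivative ?S' t) (at t)"
      using solution_has_derivative(1)[OF sol elim]
      by (auto intro!: derivative_eq_intros simp: ac_simps)
    moreover have "?S' t \<le> (\<Sum>i<m. B\<^sup>2 / c - c * (u i t)\<^sup>2)"
      using abs_drive_le decay_ge unfolding B_def c_def
      by (intro sum_mono dissipation_bound c[unfolded c_def]) auto
    moreover have "(\<Sum>i<m. B\<^sup>2 / c - c * (u i t)\<^sup>2) = real m * B\<^sup>2 / c - c * (\<Sum>i<m. (u i t)\<^sup>2)"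
      by (simp add: sum_subtractf sum_distrib_left)
    ultimately show ?case by simp
  qed
  from eventually_le_of_linear_differential_inequality[OF c \<delta> this]
  show ?thesis by (simp add: B_def c_def power2_eq_square)
qed

lemma eventually_memristor_sq_le:
  assumes sol: "solution u \<rho>" and \<delta>: "0 < \<delta>"
    and energy: "\<forall>\<^sub>F t in at_top. (\<Sum>i<m. (u i t)\<^sup>2) \<le> S"
  shows "\<forall>\<^sub>F t in at_top. (\<rho> t)\<^sup>2 \<le> real m * gam2 m \<gamma> / b\<^sup>2 * S + \<delta>"
proof -
  let ?Y' = "\<lambda>t. 2 * \<rho> t * ((\<Sum>i<m. \<gamma> i * u i t) - b * \<rho> t)"
  have "\<forall>\<^sub>F t in at_top. ((\<lambda>t. (\<rho> t)\<^sup>2) has_real_derivative ?Y' t) (at t)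
      \<and> ?Y' t \<le> real m * gam2 m \<gamma> * S / b - b * (\<rho> t)\<^sup>2"
    using eventually_gt_at_top[of 0] energy
  proof eventually_elim
    case (elim t)
    let ?s = "\<Sum>i<m. \<gamma> i * u i t"
    have "((\<lambda>t. (\<rho> t)\<^sup>2) has_real_derivative ?Y' t) (at t)"
      using solution_has_derivative(2)[OF sol elim(1)] by (auto intro!: derivative_eq_intros)
    moreover have "?Y' t \<le> \<bar>?s\<bar>\<^sup>2 / b - b * (\<rho> t)\<^sup>2"
      by (intro dissipation_bound b_pos) auto
    moreover have "?s\<^sup>2 \<le> (\<Sum>i<m. (\<gamma> i)\<^sup>2) * (\<Sum>i<m. (u i t)\<^sup>2)"
      by (rule Cauchy_Schwarz_ineq_sum)
    moreover have "(\<Sum>i<m. (\<gamma> i)\<^sup>2) * (\<Sum>i<m. (u i t)\<^sup>2) \<le> real m * gam2 m \<gamma> * S"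
      using elim(2) power2_le_gam2[of _ m \<gamma>] gam2_nonneg[OF m_pos, of \<gamma>]
        sum_mono[of "{..<m}" "\<lambda>i. (\<gamma> i)\<^sup>2" "\<lambda>_. gam2 m \<gamma>"]
      by (intro mult_mono) (auto intro: sum_nonneg)
    ultimately show ?case
      using b_pos divide_right_mono[of "?s\<^sup>2" "real m * gam2 m \<gamma> * S" b] by simp
  qed
  from eventually_le_of_linear_differential_inequality[OF b_pos \<delta> this]
  show ?thesis by (simp add: power2_eq_square)
qed

lemma eventually_absorbed:
  assumes sol: "solution u \<rho>"
  shows "\<forall>\<^sub>F t in at_top. (\<forall>i<m. \<bar>u i t\<bar> \<le> sqrt Q) \<and> (\<rho> t)\<^sup>2 \<le> Q"
proof -
  define R where "R = real m * (real m * Wmax m w * \<beta> + Jmax m J)\<^sup>2 / (amin m a - k)\<^sup>2"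
  define c where "c = real m * gam2 m \<gamma> / b\<^sup>2"
  define \<delta> where "\<delta> = 1 / (1 + c)"
  have c: "0 \<le> c" using gam2_nonneg[OF m_pos] unfolding c_def by simp
  have R: "0 \<le> R" unfolding R_def by simp
  have \<delta>: "0 < \<delta>" "\<delta> \<le> 1" "c * \<delta> + \<delta> = 1" using c unfolding \<delta>_def by (auto simp: field_simps)
  have Q: "1 + (c + 1) * R \<le> Q" using Qc_ge[OF m_pos b_pos a_gt_k] unfolding c_def R_def .
  have "0 \<le> c * R" using c R by simp
  then have R_le: "R + \<delta> \<le> Q" and cR_le: "c * (R + \<delta>) + \<delta> \<le> Q"
    using \<delta> Q R by (simp_all add: algebra_simps)
  have energy: "\<forall>\<^sub>F t in at_top. (\<Sum>i<m. (u i t)\<^sup>2) \<le> R + \<delta>"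
    using eventually_sum_squares_le[OF sol \<delta>(1)] unfolding R_def .
  with eventually_memristor_sq_le[OF sol \<delta>(1) energy]
  show ?thesis
  proof eventually_elim
    case (elim t)
    have "\<bar>u i t\<bar> \<le> sqrt Q" if i: "i < m" for i
    proof (rule real_le_rsqrt)
      have "(u i t)\<^sup>2 \<le> (\<Sum>i<m. (u i t)\<^sup>2)" using i by (intro member_le_sum) auto
      also have "\<dots> \<le> Q" using elim(2) R_le by linarith
      finally show "\<bar>u i t\<bar>\<^sup>2 \<le> Q" by simp
    qed
    moreover have "(\<rho> t)\<^sup>2 \<le> Q"
      using elim(1) cR_le unfolding c_def by linarith
    ultimately show ?case by blast
  qed
qed

lemma sync_bound:
  assumes sol: "solution u \<rho>" and T: "0 < T"
    and absorbed: "\<forall>t\<ge>T. (\<forall>l<m. \<bar>u l t\<bar> \<le> sqrt Q) \<and> (\<rho> t)\<^sup>2 \<le> Q"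
    and i: "i < m" and j: "j < m" and t: "T \<le> t"
  shows "(u i t - u j t)\<^sup>2 \<le> exp (- \<mu> * (t - T)) * (u i T - u j T)\<^sup>2 + (sync_defect / \<mu>)\<^sup>2"
proof -
  let ?F = "\<lambda>s. drive (\<lambda>l. u l s) i - drive (\<lambda>l. u l s) j
    - (decay (\<lambda>l. u l s) (\<rho> s) i - decay (\<lambda>l. u l s) (\<rho> s) j) * u j s"
  let ?d = "\<lambda>s. decay (\<lambda>l. u l s) (\<rho> s) i"
  let ?e' = "\<lambda>s. 2 * (u i s - u j s) * (?F s - ?d s * (u i s - u j s))"
  have deriv: "((\<lambda>s. (u i s - u j s)\<^sup>2) has_real_derivative ?e' s) (at s)" if "T \<le> s" for s
  proof -
    have "((\<lambda>s. (u i s - u j s)\<^sup>2) has_real_derivative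
        2 * (u i s - u j s) * ((drive (\<lambda>l. u l s) i - ?d s * u i s)
          - (drive (\<lambda>l. u l s) j - decay (\<lambda>l. u l s) (\<rho> s) j * u j s))) (at s)"
      using solution_has_derivative(1)[OF sol _ i, of s] solution_has_derivative(1)[OF sol _ j, of s]
        T that by (auto intro!: derivative_eq_intros)
    then show ?thesis by (simp add: algebra_simps)
  qed
  have ineq: "?e' s \<le> sync_defect\<^sup>2 / \<mu> - \<mu> * (u i s - u j s)\<^sup>2" if "T \<le> s" for s
    using absorbed that i j
    by (intro dissipation_bound muP_pos muP_le_decay abs_sync_forcing_le) auto
  have "(u i t - u j t)\<^sup>2 \<le> exp (- \<mu> * (t - T)) * (u i T - u j T)\<^sup>2 + sync_defect\<^sup>2 / \<mu> / \<mu>"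
    by (rule linear_differential_inequality_nonneg[OF muP_pos _ _ _ t,
          where y = "\<lambda>s. (u i s - u j s)\<^sup>2" and y' = ?e' and K = "sync_defect\<^sup>2 / \<mu>"])
      (use deriv ineq muP_pos in auto)
  moreover have "sync_defect\<^sup>2 / \<mu> / \<mu> = (sync_defect / \<mu>)\<^sup>2" by (simp add: power2_eq_square)
  ultimately show ?thesis by simp
qed

lemma exponential_synchronization:
  assumes sol: "solution u \<rho>"
  shows "\<exists>T>0. \<forall>t\<ge>T. \<forall>i<m. \<forall>j<m.
    (u i t - u j t)\<^sup>2 \<le> exp (- \<mu> * (t - T)) * (u i T - u j T)\<^sup>2 + (sync_defect / \<mu>)\<^sup>2"
proof -
  obtain T where T: "\<forall>t\<ge>T. ((\<forall>l<m. \<bar>u l t\<bar> \<le> sqrt Q) \<and> (\<rho> t)\<^sup>2 \<le> Q) \<and> 0 < t"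
    using eventually_conj[OF eventually_absorbed[OF sol] eventually_gt_at_top[of 0]]
    by (auto simp: eventually_at_top_linorder)
  then show ?thesis
    using sync_bound[OF sol] by (intro exI[of _ T]) auto
qed

lemma sync_defect_nonneg: "0 \<le> sync_defect"
proof -
  have "0 \<le> \<beta>" using f_bdd m_pos by (meson abs_ge_zero order_trans)
  then show ?thesis
    unfolding sync_defect_def using Q_ge_1 k_pos m_pos dstar_nonneg Wstar_nonneg
    by (intro add_nonneg_nonneg mult_nonneg_nonneg) auto
qed

lemma sync_defect_div_muP_less:
  assumes \<epsilon>: "0 < \<epsilon>" and P_big: "Pstar m a k b \<gamma> w \<beta> J \<eta> r V \<epsilon> < P"
  shows "sync_defect / \<mu> < \<epsilon>"
proof -
  define E where "E = 1 + exp (r * (sqrt Q + \<bar>V\<bar>))"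
  have E: "0 < E" unfolding E_def by (simp add: add_pos_pos)
  have "Q powr (3 / 2) = Q powr 1 * Q powr (1 / 2)"
    unfolding powr_add[symmetric] by simp
  also have "\<dots> = Q * sqrt Q"
    using Q_ge_1 by (simp add: powr_half_sqrt)
  finally have "Pstar m a k b \<gamma> w \<beta> J \<eta> r V \<epsilon> = sync_defect * E / (real m * \<epsilon>)"
    unfolding Pstar_def Let_def sync_defect_def E_def by (simp add: mult.assoc)
  then have "sync_defect * E < P * (real m * \<epsilon>)"
    using P_big \<epsilon> m_pos by (simp add: pos_divide_less_eq)
  then have "sync_defect < \<epsilon> * (P * (real m / E))"
    using E by (simp add: field_simps)
  also have "\<dots> \<le> \<epsilon> * \<mu>"
    using amin_gt[OF m_pos a_gt_k] \<epsilon> unfolding muP_eq E_def[symmetric]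
    by (intro mult_left_mono) auto
  finally show ?thesis using muP_pos by (simp add: divide_less_eq mult.commute)
qed

end

theorem theorem3p1:
  fixes m :: nat and a \<eta> J \<gamma> :: "nat \<Rightarrow> real" and w :: "nat \<Rightarrow> nat \<Rightarrow> real"
    and f \<phi> :: "nat \<Rightarrow> real \<Rightarrow> real" and k b \<beta> r V P \<epsilon> :: real
  assumes m2: "m \<ge> 2"
    and r_pos: "r > 0" and P_pos: "P > 0" and b_pos: "b > 0" and beta_pos: "\<beta> > 0"
    and k_pos: "k > 0"
    and a_pos: "\<forall>i<m. a i > 0" and eta_pos: "\<forall>i<m. \<eta> i > 0"
    and a_gt_k: "\<forall>i<m. a i > k"
    and f_lip: "\<forall>i<m. \<forall>x. \<exists>\<delta>>0. \<exists>L. L-lipschitz_on (ball x \<delta>) (f i)"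
    and f_bdd: "\<forall>i<m. \<forall>s. \<bar>f i s\<bar> \<le> \<beta>"
    and phi_def: "\<forall>i<m. \<forall>s. \<phi> i s = 1 - \<eta> i * s\<^sup>2"
    and eps_pos: "\<epsilon> > 0"
    and P_big: "P > Pstar m a k b \<gamma> w \<beta> J \<eta> r V \<epsilon>"
  shows "muP m a k b \<gamma> w \<beta> J r V P > 0
    \<and> (\<exists>D. 0 \<le> D \<and> D < \<epsilon> \<and>
         (\<forall>u \<rho>. is_solution m a w f k \<phi> J P r V \<gamma> b u \<rho> \<longrightarrow>
            (\<forall>i<m. \<forall>j<m. Limsup at_top (\<lambda>t. ereal \<bar>u i t - u j t\<bar>) \<le> ereal D)
          \<and> (\<exists>T\<ge>0. \<forall>t>T. \<forall>i<m. \<forall>j<m. i \<noteq> j \<longrightarrow>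
               (u i t - u j t)\<^sup>2 \<le> exp (- muP m a k b \<gamma> w \<beta> J r V P * (t - T)) * (u i T - u j T)\<^sup>2 + D\<^sup>2)))"
proof -
  \<comment> \<open>f_lip only guarantees that solutions exist; the claim quantifies over solutions.\<close>
  interpret memristive_hopfield m a \<eta> J \<gamma> w f \<phi> k b \<beta> r V P
    using assms by unfold_locales (auto simp: less_imp_le)
  define D where "D = sync_defect / \<mu>"
  have D: "0 \<le> D" "D < \<epsilon>"
    unfolding D_def using sync_defect_nonneg muP_pos sync_defect_div_muP_less[OF eps_pos P_big]
    by simp_all
  have "(\<forall>i<m. \<forall>j<m. Limsup at_top (\<lambda>t. ereal \<bar>u i t - u j t\<bar>) \<le> ereal D)
      \<and> (\<exists>T\<ge>0. \<forall>t>T. \<forall>i<m. \<forall>j<m. i \<noteq> j \<longrightarrow>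
           (u i t - u j t)\<^sup>2 \<le> exp (- \<mu> * (t - T)) * (u i T - u j T)\<^sup>2 + D\<^sup>2)"
    if sol: "solution u \<rho>" for u \<rho>
  proof -
    obtain T where "0 < T" and sync: "\<forall>t\<ge>T. \<forall>i<m. \<forall>j<m.
        (u i t - u j t)\<^sup>2 \<le> exp (- \<mu> * (t - T)) * (u i T - u j T)\<^sup>2 + D\<^sup>2"
      using exponential_synchronization[OF sol] unfolding D_def by blast
    have "Limsup at_top (\<lambda>t. ereal \<bar>u i t - u j t\<bar>) \<le> ereal D" if "i < m" "j < m" for i j
      using sync that
      by (intro Limsup_abs_le_of_exp_bound[OF muP_pos D(1), where T = T and c = "(u i T - u j T)\<^sup>2"])
        auto
    then show ?thesis using \<open>0 < T\<close> sync by (auto intro!: exI[of _ T])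
  qed
  then show ?thesis using muP_pos D by blast
qed

end
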